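(* Let $\sigma>0$, $\lambda>0$, $\rho>0$ satisfy $\rho^{-2}\sigma<1$ and $\rho\le\lambda-2\rho^{-1}\sigma(1-\rho^{-2}\sigma)^{-1}$. Define $\sigma_1=\sigma$, $\lambda_1=\lambda$ and $\sigma_{k+1}=\lambda_k^{-2}\sigma_k^2$, $\lambda_{k+1}=\lambda_k-2\lambda_k^{-1}\sigma_k$ for $k\in\mathbb{Z}_{>0}$. Then the sequence $\{(\sigma_k,\lambda_k)\}_{k\ge1}$ is convergent, with $\sigma_k\to0$, $\lambda_k>0$ for all $k\in\mathbb{Z}_{>0}$, and $\lambda_k\downarrow\bar\lambda$ as $k\to\infty$ for some $\bar\lambda\ge\rho$. *)

theory Defs
  imports "HOL-Analysis.Analysis"
begin

text \<open>The iteration (sigma_k, lambda_k), indexed from 0: sl s l 0 = (sigma_1, lambda_1).\<close>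
primrec sl :: "real \<Rightarrow> real \<Rightarrow> nat \<Rightarrow> real \<times> real" where
  "sl s l 0 = (s, l)"
| "sl s l (Suc k) =
     (let sk = fst (sl s l k); lk = snd (sl s l k)
      in (sk ^ 2 / lk ^ 2, lk - 2 * sk / lk))"

end

theory Submission
  imports Defs
begin

text \<open>With \<open>q = \<sigma>/\<rho>\<^sup>2 < 1\<close>, an induction shows
  \<open>0 < \<sigma>\<^sub>k \<le> \<sigma> q\<^sup>k\<close> and \<open>\<lambda>\<^sub>k \<ge> \<rho> + 2 (\<sigma>/\<rho>) q\<^sup>k / (1 - q)\<close>:
  as long as \<open>\<lambda>\<^sub>k \<ge> \<rho>\<close>, the decrement \<open>2 \<sigma>\<^sub>k / \<lambda>\<^sub>k \<le> 2 (\<sigma>/\<rho>) q\<^sup>k\<close> is exactly the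
  drop of the geometric tail, and \<open>\<sigma>\<^sub>k\<^sub>+\<^sub>1 = \<sigma>\<^sub>k (\<sigma>\<^sub>k/\<lambda>\<^sub>k\<^sup>2) \<le> \<sigma>\<^sub>k q\<close>.\<close>

lemma fst_sl_Suc: "fst (sl s l (Suc k)) = fst (sl s l k) ^ 2 / snd (sl s l k) ^ 2"
  by (simp add: Let_def)

lemma snd_sl_Suc: "snd (sl s l (Suc k)) = snd (sl s l k) - 2 * fst (sl s l k) / snd (sl s l k)"
  by (simp add: Let_def)

lemma sl_step_invariant:
  fixes r s x y :: real
  defines "q \<equiv> s / r ^ 2"
  assumes "0 < s" "0 < r" "q < 1"
    and "0 < x" "x \<le> s * q ^ k" "r + 2 * (s / r) * q ^ k / (1 - q) \<le> y"
  shows "0 < x ^ 2 / y ^ 2"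
    and "x ^ 2 / y ^ 2 \<le> s * q ^ Suc k"
    and "r + 2 * (s / r) * q ^ Suc k / (1 - q) \<le> y - 2 * x / y"
proof -
  have "0 < q" using assms by (simp add: q_def)
  then have "0 \<le> 2 * (s / r) * q ^ k / (1 - q)"
    using assms by simp
  then have "r \<le> y" using assms(7) by linarith
  then have "0 < y" using \<open>0 < r\<close> by linarith
  show "0 < x ^ 2 / y ^ 2" using \<open>0 < x\<close> \<open>0 < y\<close> by simp
  have "x / y ^ 2 \<le> x / r ^ 2"
    using \<open>0 < x\<close> \<open>r \<le> y\<close> \<open>0 < r\<close> by (simp add: frac_le power_mono)
  also have "\<dots> \<le> q ^ Suc k"
    using assms(6) \<open>0 < r\<close> by (simp add: q_def divide_right_mono field_simps)
  also have "\<dots> \<le> q" using \<open>0 < q\<close> \<open>q < 1\<close> by (simp add: power_le_one)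
  finally have ratio: "x / y ^ 2 \<le> q" .
  have "x ^ 2 / y ^ 2 = x * (x / y ^ 2)" by (simp add: power2_eq_square)
  also have "\<dots> \<le> (s * q ^ k) * q"
    using assms(5,6) ratio \<open>0 < y\<close> by (intro mult_mono) auto
  finally show "x ^ 2 / y ^ 2 \<le> s * q ^ Suc k" by (simp add: algebra_simps)
  have "2 * x / y \<le> 2 * (s * q ^ k) / r"
  proof -
    have "x / y \<le> x / r" using \<open>0 < x\<close> \<open>r \<le> y\<close> \<open>0 < r\<close> by (simp add: frac_le)
    also have "\<dots> \<le> s * q ^ k / r" using assms(6) \<open>0 < r\<close> by (simp add: divide_right_mono)
    finally show ?thesis by simp
  qed
  moreover have "2 * (s / r) * q ^ k / (1 - q) - 2 * (s * q ^ k) / r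
      = 2 * (s / r) * q ^ Suc k / (1 - q)"
    using \<open>q < 1\<close> \<open>0 < r\<close> by (simp add: field_simps)
  ultimately show "r + 2 * (s / r) * q ^ Suc k / (1 - q) \<le> y - 2 * x / y"
    using assms(7) by linarith
qed

lemma sl_invariant:
  fixes s l r :: real
  defines "q \<equiv> s / r ^ 2"
  assumes "0 < s" "0 < r" "q < 1" "r + 2 * (s / r) / (1 - q) \<le> l"
  shows "0 < fst (sl s l k) \<and> fst (sl s l k) \<le> s * q ^ k
    \<and> r + 2 * (s / r) * q ^ k / (1 - q) \<le> snd (sl s l k)"
proof (induction k)
  case 0
  then show ?case using assms by simp
next
  case (Suc k)
  then show ?case
    using sl_step_invariant[where x = "fst (sl s l k)" and y = "snd (sl s l k)" and k = k] assms
    by (simp only: fst_sl_Suc snd_sl_Suc q_def)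
qed

lemma snd_sl_ge:
  fixes s l r :: real
  assumes "0 < s" "0 < r" "s / r ^ 2 < 1" "r + 2 * (s / r) / (1 - s / r ^ 2) \<le> l"
  shows "r \<le> snd (sl s l k)"
proof -
  have "0 \<le> 2 * (s / r) * (s / r ^ 2) ^ k / (1 - s / r ^ 2)"
    using assms by simp
  then show ?thesis using sl_invariant[OF assms, of k] by linarith
qed

lemma fst_sl_LIMSEQ_zero:
  fixes s l r :: real
  assumes "0 < s" "0 < r" "s / r ^ 2 < 1" "r + 2 * (s / r) / (1 - s / r ^ 2) \<le> l"
  shows "(\<lambda>k. fst (sl s l k)) \<longlonglongrightarrow> 0"
proof (rule tendsto_sandwich[of "\<lambda>_. 0" _ _ "\<lambda>k. s * (s / r ^ 2) ^ k"])
  show "\<forall>\<^sub>F k in sequentially. 0 \<le> fst (sl s l k)"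
    using sl_invariant[OF assms] by (simp add: less_imp_le)
  show "\<forall>\<^sub>F k in sequentially. fst (sl s l k) \<le> s * (s / r ^ 2) ^ k"
    using sl_invariant[OF assms] by simp
  have "(\<lambda>k. (s / r ^ 2) ^ k) \<longlonglongrightarrow> 0"
    using assms by (intro LIMSEQ_realpow_zero) auto
  then show "(\<lambda>k. s * (s / r ^ 2) ^ k) \<longlonglongrightarrow> 0"
    by (rule tendsto_mult_right_zero)
qed simp

lemma decseq_snd_sl:
  assumes "\<And>k. 0 < fst (sl s l k)" "\<And>k. 0 < snd (sl s l k)"
  shows "decseq (\<lambda>k. snd (sl s l k))"
proof (rule decseq_SucI)
  fix k
  have "0 < 2 * fst (sl s l k) / snd (sl s l k)" using assms by simp
  then show "snd (sl s l (Suc k)) \<le> snd (sl s l k)" unfolding snd_sl_Suc by linarith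
qed

theorem lemma4p1:
  fixes s l r :: real
  assumes "s > 0" and "l > 0" and "r > 0"
    and "s / r^2 < 1"
    and "r \<le> l - 2 * (s / r) / (1 - s / r^2)"
  shows "convergent (sl s l)
    \<and> (\<lambda>k. fst (sl s l k)) \<longlonglongrightarrow> 0
    \<and> (\<forall>k. snd (sl s l k) > 0)
    \<and> (\<exists>lbar. lbar \<ge> r \<and> decseq (\<lambda>k. snd (sl s l k))
                 \<and> (\<lambda>k. snd (sl s l k)) \<longlonglongrightarrow> lbar)"
proof -
  have hyps: "0 < s" "0 < r" "s / r ^ 2 < 1" "r + 2 * (s / r) / (1 - s / r ^ 2) \<le> l"
    using assms by auto
  note ge = snd_sl_ge[OF hyps]
  have pos: "\<forall>k. 0 < snd (sl s l k)" using ge \<open>0 < r\<close> less_le_trans by blast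
  have dec: "decseq (\<lambda>k. snd (sl s l k))"
    using decseq_snd_sl sl_invariant[OF hyps] pos by blast
  obtain lbar where lim: "(\<lambda>k. snd (sl s l k)) \<longlonglongrightarrow> lbar"
    using decseq_convergent[OF dec, of r] ge by blast
  have "r \<le> lbar" using LIMSEQ_le_const[OF lim] ge by blast
  have fst_lim: "(\<lambda>k. fst (sl s l k)) \<longlonglongrightarrow> 0" using fst_sl_LIMSEQ_zero[OF hyps] .
  have "sl s l \<longlonglongrightarrow> (0, lbar)"
    using tendsto_Pair[OF fst_lim lim] by simp
  then have "convergent (sl s l)" by (auto simp: convergent_def)
  then show ?thesis using fst_lim pos dec lim \<open>r \<le> lbar\<close> by blast
qed

end
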